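(* Let $N\geq 2$ be an integer, let $I_0>0$, and let $0<\mu_{min}\leq\mu_{max}$ be given. For $K>0$, $\mu_1\in\mathbb{R}$ and $\varepsilon\geq 0$ define $$G_N(K,\mu_1,\varepsilon)=\frac{I_0}{K}\Big[(1+K\mu_1)^N+\big(1-K\mu_1(1+\varepsilon)\big)^N-2\Big].$$ Then for every $K>0$ there exists $\delta>0$ such that whenever $0\leq\varepsilon_{max}<\delta$, one has $G_N(K,\mu_1,\varepsilon)>0$ for all $\mu_1$ with $\mu_{min}\leq|\mu_1|\leq\mu_{max}$ and all $\varepsilon$ with $0\leq\varepsilon\leq\varepsilon_{max}$.
   Context: Interpretation: $G_N(K,\mu_1,\varepsilon)$ is the expected cumulative trading gain $\mathbb{E}[g(N)]$ after $N$ periods of a two-stock long-short linear feedback controller with initial investment $I_0$ and feedback parameter $K$, where the first stock has mean return $\mu_1$ and the second has mean return $(1+\varepsilon)\beta_0\mu_1$ with $\beta_0\neq 0$ known and $\varepsilon\in[0,\varepsilon_{max}]$ unknown. The corollary says that for any feedback parameter, positivity of the expected gain is robust once the correlation uncertainty bound $\varepsilon_{max}$ is small enough. *)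

theory Defs
  imports Complex_Main
begin

definition G :: "nat \<Rightarrow> real \<Rightarrow> real \<Rightarrow> real \<Rightarrow> real \<Rightarrow> real" where
  "G N I0 K mu1 eps = (I0 / K) * ((1 + K * mu1) ^ N + (1 - K * mu1 * (1 + eps)) ^ N - 2)"

end

theory Submission
  imports Defs
begin

text \<open>With \<open>x = K \<mu>\<^sub>1\<close>, the gain at \<open>\<epsilon> = 0\<close> is \<open>I\<^sub>0/K\<close> times
  \<open>(1 + x)\<^sup>N + (1 - x)\<^sup>N - 2 \<ge> N (N - 1) x\<^sup>2\<close>, which is bounded below by a positive
  constant uniformly for \<open>\<mu>\<^sub>m\<^sub>i\<^sub>n \<le> |\<mu>\<^sub>1| \<le> \<mu>\<^sub>m\<^sub>a\<^sub>x\<close>. Replacing \<open>1 - x\<close> by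
  \<open>1 - x (1 + \<epsilon>)\<close> moves the bracket by at most a Lipschitz constant times \<open>\<epsilon>\<close>, again
  uniformly in \<open>\<mu>\<^sub>1\<close>, so a small enough \<open>\<epsilon>\<^sub>m\<^sub>a\<^sub>x\<close> keeps it positive.\<close>

text \<open>The even and odd parts are bounded together: the induction step for each uses the bound
  for the other.\<close>

lemma one_plus_minus_power_bounds:
  fixes x :: real
  shows "2 + real n * (real n - 1) * x\<^sup>2 \<le> (1 + x)^n + (1 - x)^n
    \<and> 2 * real n * x\<^sup>2 \<le> x * ((1 + x)^n - (1 - x)^n)"
proof (induction n)
  case 0
  then show ?case by simp
next
  case (Suc n)
  define p where "p = (1 + x)^n + (1 - x)^n"
  define q where "q = (1 + x)^n - (1 - x)^n"
  have p_ge: "2 + real n * (real n - 1) * x\<^sup>2 \<le> p" and q_ge: "2 * real n * x\<^sup>2 \<le> x * q"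
    using Suc by (auto simp: p_def q_def)
  have "0 \<le> real n * (real n - 1) * x\<^sup>2"
    by (cases n) auto
  then have "x\<^sup>2 * 2 \<le> x\<^sup>2 * p"
    using p_ge by (intro mult_left_mono) auto
  moreover have "(1 + x)^Suc n + (1 - x)^Suc n = p + x * q"
    and "x * ((1 + x)^Suc n - (1 - x)^Suc n) = x * q + x\<^sup>2 * p"
    by (simp_all add: p_def q_def algebra_simps power2_eq_square)
  ultimately show ?case
    using p_ge q_ge by (simp add: algebra_simps)
qed

corollary one_plus_power_add_one_minus_power_ge:
  fixes x :: real
  shows "2 + real n * (real n - 1) * x\<^sup>2 \<le> (1 + x)^n + (1 - x)^n"
  using one_plus_minus_power_bounds by blast

text \<open>Rescaling by \<open>1/M\<close> reduces this to \<open>norm_power_diff\<close>.\<close>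

lemma norm_power_diff_le:
  fixes z w :: "'a::real_normed_field"
  assumes "norm z \<le> M" "norm w \<le> M"
  shows "norm (z^Suc n - w^Suc n) \<le> real (Suc n) * M^n * norm (z - w)"
proof (cases "M = 0")
  case True
  then show ?thesis using assms by simp
next
  case False
  have M: "M > 0" using False assms(1) norm_ge_zero[of z] by linarith
  define s :: 'a where "s = of_real (inverse M)"
  have norm_s: "norm s = inverse M" using M by (simp add: s_def nonzero_norm_inverse)
  have "norm (s * z) \<le> 1" "norm (s * w) \<le> 1"
    using assms M by (simp_all add: norm_mult norm_s divide_le_eq_1 flip: divide_inverse_commute)
  then have "norm ((s * z)^Suc n - (s * w)^Suc n) \<le> real (Suc n) * norm (s * z - s * w)"
    by (rule norm_power_diff)
  also have "(s * z)^Suc n - (s * w)^Suc n = s^Suc n * (z^Suc n - w^Suc n)"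
    by (simp add: power_mult_distrib right_diff_distrib)
  also have "s * z - s * w = s * (z - w)"
    by (simp add: right_diff_distrib)
  finally have "inverse M ^ Suc n * norm (z^Suc n - w^Suc n) \<le> real (Suc n) * (inverse M * norm (z - w))"
    by (simp add: norm_mult norm_power norm_s)
  then show ?thesis
    using M by (simp add: power_inverse field_simps)
qed

lemma power_one_minus_perturb_le:
  fixes x eps b :: real
  assumes "\<bar>x\<bar> \<le> b" "0 \<le> eps" "eps \<le> 1"
  shows "\<bar>(1 - x * (1 + eps))^Suc n - (1 - x)^Suc n\<bar> \<le> real (Suc n) * (1 + 2 * b)^n * b * eps"
proof -
  have "\<bar>x * (1 + eps)\<bar> \<le> b * 2"
    unfolding abs_mult using assms by (intro mult_mono) auto
  then have "\<bar>1 - x * (1 + eps)\<bar> \<le> 1 + 2 * b" "\<bar>1 - x\<bar> \<le> 1 + 2 * b"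
    using assms by auto
  then have "\<bar>(1 - x * (1 + eps))^Suc n - (1 - x)^Suc n\<bar>
      \<le> real (Suc n) * (1 + 2 * b)^n * \<bar>(1 - x * (1 + eps)) - (1 - x)\<bar>"
    using norm_power_diff_le[of "1 - x * (1 + eps)" "1 + 2 * b" "1 - x" n] by simp
  also have "\<bar>(1 - x * (1 + eps)) - (1 - x)\<bar> = \<bar>x\<bar> * eps"
    using assms by (simp add: algebra_simps abs_mult)
  also have "real (Suc n) * (1 + 2 * b)^n * (\<bar>x\<bar> * eps) \<le> real (Suc n) * (1 + 2 * b)^n * (b * eps)"
    using assms by (intro mult_left_mono mult_right_mono) auto
  finally show ?thesis
    by (simp add: mult.assoc)
qed

lemma gain_bracket_pos:
  fixes x eps a b :: real
  assumes "2 \<le> N" "0 < a" "a \<le> \<bar>x\<bar>" "\<bar>x\<bar> \<le> b" "0 \<le> eps" "eps \<le> 1"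
    and small: "real N * (1 + 2 * b)^(N - 1) * b * eps < real N * (real N - 1) * a\<^sup>2"
  shows "0 < (1 + x)^N + (1 - x * (1 + eps))^N - 2"
proof -
  obtain n where N: "N = Suc n"
    using assms(1) by (cases N) auto
  have "a\<^sup>2 \<le> x\<^sup>2"
    using assms(2,3) by (metis abs_of_pos power2_abs power_mono less_imp_le)
  then have "real N * (real N - 1) * a\<^sup>2 \<le> real N * (real N - 1) * x\<^sup>2"
    using assms(1) by (intro mult_left_mono) auto
  also have "\<dots> \<le> (1 + x)^N + (1 - x)^N - 2"
    using one_plus_power_add_one_minus_power_ge[of N x] by simp
  finally have "real N * (1 + 2 * b)^(N - 1) * b * eps < (1 + x)^N + (1 - x)^N - 2"
    using small by linarith
  moreover have "\<bar>(1 - x * (1 + eps))^N - (1 - x)^N\<bar> \<le> real N * (1 + 2 * b)^(N - 1) * b * eps"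
    using power_one_minus_perturb_le[of x b eps n] assms N by simp
  ultimately show ?thesis
    by linarith
qed

theorem mainTheorem2:
  fixes N :: nat and I0 mu_min mu_max :: real
  assumes "N \<ge> 2" and "I0 > 0" and "0 < mu_min" and "mu_min \<le> mu_max"
  shows "\<forall>K>0. \<exists>\<delta>>0. \<forall>eps_max. 0 \<le> eps_max \<and> eps_max < \<delta> \<longrightarrow>
           (\<forall>mu1 eps. mu_min \<le> \<bar>mu1\<bar> \<and> \<bar>mu1\<bar> \<le> mu_max \<and> 0 \<le> eps \<and> eps \<le> eps_max
              \<longrightarrow> G N I0 K mu1 eps > 0)"
proof (intro allI impI)
  fix K :: real
  assume K: "K > 0"
  define a where "a = K * mu_min"
  define b where "b = K * mu_max"
  define L where "L = real N * (1 + 2 * b)^(N - 1) * b"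
  define c where "c = real N * (real N - 1) * a\<^sup>2"
  have "0 < a" "a \<le> b"
    using K assms(3,4) by (simp_all add: a_def b_def)
  then have "0 < L" "0 < c"
    using assms(1) by (simp_all add: L_def c_def)
  show "\<exists>\<delta>>0. \<forall>eps_max. 0 \<le> eps_max \<and> eps_max < \<delta> \<longrightarrow>
           (\<forall>mu1 eps. mu_min \<le> \<bar>mu1\<bar> \<and> \<bar>mu1\<bar> \<le> mu_max \<and> 0 \<le> eps \<and> eps \<le> eps_max
              \<longrightarrow> G N I0 K mu1 eps > 0)"
  proof (intro exI[of _ "min 1 (c / L)"] conjI allI impI)
    show "0 < min 1 (c / L)"
      using \<open>0 < L\<close> \<open>0 < c\<close> by simp
    fix eps_max mu1 eps
    assume "0 \<le> eps_max \<and> eps_max < min 1 (c / L)"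
      and "mu_min \<le> \<bar>mu1\<bar> \<and> \<bar>mu1\<bar> \<le> mu_max \<and> 0 \<le> eps \<and> eps \<le> eps_max"
    then have "a \<le> \<bar>K * mu1\<bar>" "\<bar>K * mu1\<bar> \<le> b" "0 \<le> eps" "eps \<le> 1" "eps < c / L"
      using K by (auto simp: a_def b_def abs_mult)
    moreover from this(5) have "L * eps < c"
      using \<open>0 < L\<close> by (simp add: pos_less_divide_eq mult.commute)
    ultimately have "0 < (1 + K * mu1)^N + (1 - K * mu1 * (1 + eps))^N - 2"
      using gain_bracket_pos[of N a "K * mu1" b eps] assms(1) \<open>0 < a\<close> by (simp add: L_def c_def)
    then show "G N I0 K mu1 eps > 0"
      using K assms(2) by (simp add: G_def)
  qed
qed

end
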